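(* Let $G$ be a finite bipartite graph. Then there exist $n,k\in\mathbb{N}$ with $k\le n$ such that for every 2-coloring of the edges of $B_{n,k}$, there exists an induced monochromatic copy of $G$ in $B_{n,k}$; that is, there is a set $V'$ of vertices of $B_{n,k}$ such that the induced subgraph of $B_{n,k}$ on $V'$ is isomorphic to $G$ and all of its edges receive the same color.
   Context: For $n\in\mathbb{N}$, $[n]=\{1,\dots,n\}$, and for a set $X$, $\binom{X}{k}$ denotes the set of $k$-element subsets of $X$. For $k\le n$, $B_{n,k}$ is the bipartite graph with left vertex set $[n]$, right vertex set $\binom{[n]}{k}$, and edge set $\{(x,X)\in[n]\times\binom{[n]}{k} : x\in X\}$. A bipartite graph is a graph whose vertex set is partitioned into sets $A,B$ with all edges between $A$ and $B$. For a graph $H=(V,E)$ and $V'\subseteq V$, the induced subgraph on $V'$ has vertex set $V'$ and edge set consisting of all edges of $H$ with both endpoints in $V'$. A 2-coloring of the edges is a map from the edge set to a 2-element set of colors. *)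

theory Defs
  imports Main
begin

definition bipartite_graph :: "'a set \<Rightarrow> 'a set set \<Rightarrow> bool" where
  "bipartite_graph V E \<longleftrightarrow>
     (\<exists>A B. A \<union> B = V \<and> A \<inter> B = {} \<and> (\<forall>e\<in>E. \<exists>a\<in>A. \<exists>b\<in>B. e = {a, b}))"

text \<open>The graph B_{n,k}: left vertices Inl x for x in [n], right vertices Inr X for k-subsets X of [n].\<close>

definition B_verts :: "nat \<Rightarrow> nat \<Rightarrow> (nat + nat set) set" where
  "B_verts n k = Inl ` {1..n} \<union> Inr ` {X. X \<subseteq> {1..n} \<and> card X = k}"

definition B_edges :: "nat \<Rightarrow> nat \<Rightarrow> (nat + nat set) set set" where
  "B_edges n k = {{Inl x, Inr X} | x X. x \<in> {1..n} \<and> X \<subseteq> {1..n} \<and> card X = k \<and> x \<in> X}"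

end

theory Submission
  imports Defs "HOL-Library.Ramsey"
begin

text \<open>
  Colour each k-subset X of [N] by the set of positions r < k for which the edge between X and
  its r-th smallest element is red. Ramsey's theorem with 2^k colours yields k * M points on
  whose k-subsets the colour of an edge (x, X) depends only on the position of x in X; pick a set
  Q of more than |V| positions on which it is constant. Cut these points into k blocks of
  length M > |B|. A left vertex a goes to the first point of block \<phi> a, with \<phi> : A \<rightarrow> Q
  injective; a right vertex b goes to the k-set meeting each block once, at offset 0 in the blocks
  of its neighbours and at an offset \<psi> b \<ge> 1 elsewhere, with \<psi> injective. Then membership encodes
  adjacency, every edge joins a set to its element in a position from Q and so has the same
  colour, and a block outside \<phi> ` A (there is one since k > |A|) recovers \<psi> b.
\<close>

lemma sorted_list_of_set_image_strict_mono_on: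
  fixes h :: "'a::linorder \<Rightarrow> 'b::linorder"
  assumes "finite X" and "strict_mono_on X h"
  shows "sorted_list_of_set (h ` X) = map h (sorted_list_of_set X)"
proof (rule sorted_distinct_set_unique)
  have "sorted_wrt (<) (map h (sorted_list_of_set X))"
    unfolding sorted_wrt_map
    by (rule sorted_wrt_mono_rel[OF _ strict_sorted_list_of_set])
       (use assms in \<open>auto simp: strict_mono_on_def\<close>)
  then show "sorted (map h (sorted_list_of_set X))" "distinct (map h (sorted_list_of_set X))"
    by (simp_all add: strict_sorted_iff)
qed (use assms in auto)

lemma ramsey_finite_colours:
  assumes "finite C"
  obtains N where "m \<le> N"
    and "\<forall>F \<in> [{..<N}]\<^bsup>k\<^esup> \<rightarrow> C. \<exists>H \<in> [{..<N}]\<^bsup>m\<^esup>. \<exists>\<gamma>. F ` [H]\<^bsup>k\<^esup> \<subseteq> {\<gamma>}"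
proof -
  obtain enc where enc: "bij_betw enc C {..<card C}"
    using ex_bij_betw_finite_nat[OF assms] atLeast0LessThan by auto
  obtain N0 :: nat where "partn_lst {..<N0} (replicate (card C) m) k"
    using ramsey_full by blast
  then have N: "partn_lst {..<max N0 m} (replicate (card C) m) k"
    by (rule partn_lst_greater_resource) simp
  show thesis
  proof (rule that[of "max N0 m"], simp, intro ballI)
    fix F assume F: "F \<in> [{..<max N0 m}]\<^bsup>k\<^esup> \<rightarrow> C"
    then have "enc \<circ> F \<in> [{..<max N0 m}]\<^bsup>k\<^esup> \<rightarrow> {..<card C}"
      using enc bij_betwE by fastforce
    then obtain i H where H: "H \<in> [{..<max N0 m}]\<^bsup>m\<^esup>" and "(enc \<circ> F) ` [H]\<^bsup>k\<^esup> \<subseteq> {i}"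
      by (rule partn_lstE[OF N]) auto
    moreover have "[H]\<^bsup>k\<^esup> \<subseteq> [{..<max N0 m}]\<^bsup>k\<^esup>"
      using H by (auto simp: nsets_def)
    ultimately have "F ` [H]\<^bsup>k\<^esup> \<subseteq> {inv_into C enc i}"
      using F enc by (force simp: bij_betw_def)
    with H show "\<exists>H \<in> [{..<max N0 m}]\<^bsup>m\<^esup>. \<exists>\<gamma>. F ` [H]\<^bsup>k\<^esup> \<subseteq> {\<gamma>}"
      by blast
  qed
qed

lemma ramsey_position_homogeneous:
  obtains N where "m \<le> N"
    and "\<forall>col :: nat \<Rightarrow> nat set \<Rightarrow> bool. \<exists>h P.
           strict_mono_on {..<m} h \<and> h ` {..<m} \<subseteq> {1..N} \<and>
           (\<forall>X \<in> [{..<m}]\<^bsup>k\<^esup>. \<forall>r<k. col (h (sorted_list_of_set X ! r)) (h ` X) \<longleftrightarrow> r \<in> P)"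
proof -
  obtain N where "m \<le> N" and ramsey:
    "\<forall>F \<in> [{..<N}]\<^bsup>k\<^esup> \<rightarrow> Pow {..<k}. \<exists>H \<in> [{..<N}]\<^bsup>m\<^esup>. \<exists>P. F ` [H]\<^bsup>k\<^esup> \<subseteq> {P}"
    by (rule ramsey_finite_colours[of "Pow {..<k}"]) auto
  show thesis
  proof (rule that[OF \<open>m \<le> N\<close>], intro allI)
    fix col :: "nat \<Rightarrow> nat set \<Rightarrow> bool"
    define pattern where
      "pattern X = {r. r < k \<and> col (Suc (sorted_list_of_set X ! r)) (Suc ` X)}" for X
    have "pattern \<in> [{..<N}]\<^bsup>k\<^esup> \<rightarrow> Pow {..<k}"
      by (auto simp: pattern_def)
    from ramsey[rule_format, OF this] obtain H P where H: "H \<in> [{..<N}]\<^bsup>m\<^esup>" and HP: "pattern ` [H]\<^bsup>k\<^esup> \<subseteq> {P}"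
      by blast
    then have "finite H" "card H = m" by (auto simp: nsets_def)
    then obtain h where h: "bij_betw h {..<m} H" "strict_mono_on {..<m} h"
      by (metis ex_bij_betw_strict_mono_card)
    have "col (Suc (h (sorted_list_of_set X ! r))) (Suc ` h ` X) \<longleftrightarrow> r \<in> P"
      if X: "X \<in> [{..<m}]\<^bsup>k\<^esup>" and r: "r < k" for X r
    proof -
      have "strict_mono_on X h"
        using h(2) X by (auto simp: nsets_def strict_mono_on_def)
      then have "sorted_list_of_set (h ` X) ! r = h (sorted_list_of_set X ! r)"
        using X r by (simp add: sorted_list_of_set_image_strict_mono_on nsets_def)
      moreover have "h ` X \<in> [H]\<^bsup>k\<^esup>"
        using X h(1) by (auto simp: nsets_def bij_betw_def card_image inj_on_subset)
      then have "pattern (h ` X) = P"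
        using HP by blast
      ultimately show ?thesis
        using r by (auto simp: pattern_def)
    qed
    moreover have "strict_mono_on {..<m} (Suc \<circ> h)"
      using h(2) by (auto simp: strict_mono_on_def)
    moreover have "(Suc \<circ> h) ` {..<m} \<subseteq> {1..N}"
      using h(1) H by (auto simp: bij_betw_def nsets_def Suc_le_eq)
    ultimately show "\<exists>h P. strict_mono_on {..<m} h \<and> h ` {..<m} \<subseteq> {1..N} \<and>
           (\<forall>X \<in> [{..<m}]\<^bsup>k\<^esup>. \<forall>r<k. col (h (sorted_list_of_set X ! r)) (h ` X) \<longleftrightarrow> r \<in> P)"
      by (intro exI[of _ "Suc \<circ> h"] exI[of _ P]) (simp add: image_comp)
  qed
qed

definition incidence_embedding ::
    "'a set \<Rightarrow> 'b set \<Rightarrow> ('a \<Rightarrow> 'b \<Rightarrow> bool) \<Rightarrow> 'c set \<Rightarrow> nat \<Rightarrow> ('a \<Rightarrow> 'c) \<Rightarrow> ('b \<Rightarrow> 'c set) \<Rightarrow> bool"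
  where "incidence_embedding A B adj S k \<alpha> \<beta> \<longleftrightarrow>
    inj_on \<alpha> A \<and> \<alpha> ` A \<subseteq> S \<and> inj_on \<beta> B \<and> \<beta> ` B \<subseteq> [S]\<^bsup>k\<^esup> \<and>
    (\<forall>a\<in>A. \<forall>b\<in>B. \<alpha> a \<in> \<beta> b \<longleftrightarrow> adj a b)"

lemma incidence_embedding_image:
  assumes emb: "incidence_embedding A B adj S k \<alpha> \<beta>" and h: "inj_on h S" "h ` S \<subseteq> T"
  shows "incidence_embedding A B adj T k (h \<circ> \<alpha>) (\<lambda>b. h ` \<beta> b)"
proof -
  have \<alpha>: "inj_on \<alpha> A" "\<alpha> ` A \<subseteq> S" and \<beta>: "inj_on \<beta> B" "\<beta> ` B \<subseteq> [S]\<^bsup>k\<^esup>"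
    and adj: "\<forall>a\<in>A. \<forall>b\<in>B. \<alpha> a \<in> \<beta> b \<longleftrightarrow> adj a b"
    using emb by (auto simp: incidence_embedding_def)
  have "inj_on (h \<circ> \<alpha>) A"
    using \<alpha> h(1) by (simp add: comp_inj_on inj_on_subset)
  moreover have "inj_on ((`) h \<circ> \<beta>) B"
    using \<beta> inj_on_nsets[OF h(1), of k] by (blast intro: comp_inj_on inj_on_subset)
  moreover have "(\<lambda>b. h ` \<beta> b) ` B \<subseteq> [T]\<^bsup>k\<^esup>"
    using \<beta>(2) nsets_image_funcset[of h S T k] h by auto
  moreover have "h (\<alpha> a) \<in> h ` \<beta> b \<longleftrightarrow> adj a b" if "a \<in> A" "b \<in> B" for a b
  proof -
    have "\<alpha> a \<in> S" "\<beta> b \<subseteq> S"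
      using that \<alpha>(2) \<beta>(2) by (auto simp: nsets_def)
    then show ?thesis
      using that adj inj_on_image_mem_iff[OF h(1)] by blast
  qed
  moreover have "(h \<circ> \<alpha>) ` A \<subseteq> T"
    using \<alpha>(2) h(2) by auto
  ultimately show ?thesis
    by (auto simp: incidence_embedding_def comp_def)
qed

lemma half_subset_inside_or_outside:
  assumes "finite S"
  obtains Q b where "Q \<subseteq> S" and "card S \<le> 2 * card Q" and "\<forall>r\<in>Q. r \<in> P \<longleftrightarrow> b"
proof (cases "card S \<le> 2 * card (S \<inter> P)")
  case True
  then show thesis
    by (intro that[of "S \<inter> P" True]) auto
next
  case False
  then have "card S \<le> 2 * card (S - P)"
    using card_Int_Diff[OF assms, of P] by linarith
  then show thesis
    by (intro that[of "S - P" False]) auto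
qed

definition block_transversal :: "nat \<Rightarrow> nat \<Rightarrow> (nat \<Rightarrow> nat) \<Rightarrow> nat set" where
  "block_transversal M k off = (\<lambda>r. r * M + off r) ` {..<k}"

lemma mem_block_transversal_iff:
  assumes "\<And>r. off r < M"
  shows "x \<in> block_transversal M k off \<longleftrightarrow> x div M < k \<and> x mod M = off (x div M)"
proof
  assume "x \<in> block_transversal M k off"
  then obtain r where "r < k" "x = r * M + off r"
    by (auto simp: block_transversal_def)
  then show "x div M < k \<and> x mod M = off (x div M)"
    using assms[of r] by simp
next
  assume x: "x div M < k \<and> x mod M = off (x div M)"
  show "x \<in> block_transversal M k off"
    unfolding block_transversal_def
  proof (rule image_eqI)
    show "x = x div M * M + off (x div M)"
      using x div_mult_mod_eq[of x M] by simp
    show "x div M \<in> {..<k}"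
      using x by simp
  qed
qed

lemma sorted_list_of_block_transversal:
  assumes "\<And>r. off r < M"
  shows "sorted_list_of_set (block_transversal M k off) = map (\<lambda>r. r * M + off r) [0..<k]"
proof -
  have "strict_mono (\<lambda>r. r * M + off r)"
  proof (rule strict_monoI)
    fix r s :: nat assume "r < s"
    have "r * M + off r < Suc r * M"
      using assms[of r] by simp
    also have "\<dots> \<le> s * M"
      using \<open>r < s\<close> by (intro mult_right_mono) auto
    finally show "r * M + off r < s * M + off s"
      by simp
  qed
  then show ?thesis
    unfolding block_transversal_def
    by (simp add: sorted_list_of_set_image_strict_mono_on strict_mono_on_def strict_mono_def
        lessThan_atLeast0)
qed

lemma block_transversal_in_nsets:
  assumes "\<And>r. off r < M"
  shows "block_transversal M k off \<in> [{..<k * M}]\<^bsup>k\<^esup>"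
proof -
  have "card (block_transversal M k off) = k"
    using arg_cong[OF sorted_list_of_block_transversal[OF assms, of k], of length] by simp
  moreover have "finite (block_transversal M k off)"
    by (simp add: block_transversal_def)
  moreover have "block_transversal M k off \<subseteq> {..<k * M}"
    using assms[of 0] by (auto simp: mem_block_transversal_iff[OF assms] div_less_iff_less_mult)
  ultimately show ?thesis
    by (simp add: nsets_def)
qed

lemma incidence_embedding_block_transversals:
  fixes adj :: "'a \<Rightarrow> 'b \<Rightarrow> bool"
  assumes \<phi>: "inj_on \<phi> A" "\<phi> ` A \<subseteq> {..<k}" and r0: "r0 < k" "r0 \<notin> \<phi> ` A"
    and \<psi>: "inj_on \<psi> B" "\<psi> ` B \<subseteq> {1..<M}" and "M > 0"
  defines "\<beta> \<equiv> \<lambda>b. block_transversal M k (\<lambda>r. if r \<in> \<phi> ` {a\<in>A. adj a b} then 0 else \<psi> b)"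
  shows "incidence_embedding A B adj {..<k * M} k (\<lambda>a. \<phi> a * M) \<beta>"
    and "\<And>a b. a \<in> A \<Longrightarrow> b \<in> B \<Longrightarrow> adj a b \<Longrightarrow> sorted_list_of_set (\<beta> b) ! \<phi> a = \<phi> a * M"
proof -
  define off where "off b r = (if r \<in> \<phi> ` {a\<in>A. adj a b} then 0 else \<psi> b)" for b r
  have off_less: "off b r < M" if "b \<in> B" for b r
    using that \<psi>(2) \<open>M > 0\<close> by (auto simp: off_def)
  have \<beta>_off: "\<beta> b = block_transversal M k (off b)" for b
    by (simp add: \<beta>_def off_def[abs_def])
  have mem_\<beta>: "x \<in> \<beta> b \<longleftrightarrow> x div M < k \<and> x mod M = off b (x div M)" if "b \<in> B" for b x
    unfolding \<beta>_off using off_less[OF that] by (rule mem_block_transversal_iff)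
  have off_r0: "off b r0 = \<psi> b" for b
    using r0(2) by (auto simp: off_def)
  have "inj_on \<beta> B"
  proof (rule inj_onI)
    fix b b' assume b: "b \<in> B" "b' \<in> B" and "\<beta> b = \<beta> b'"
    have "\<psi> b < M"
      using off_less[OF b(1), of r0] by (simp add: off_r0)
    then have "r0 * M + \<psi> b \<in> \<beta> b"
      using mem_\<beta>[OF b(1)] r0(1) by (simp add: off_r0)
    then have "\<psi> b = \<psi> b'"
      using mem_\<beta>[OF b(2)] \<open>\<beta> b = \<beta> b'\<close> \<open>\<psi> b < M\<close> by (simp add: off_r0)
    then show "b = b'"
      using \<psi>(1) b by (simp add: inj_on_def)
  qed
  moreover have "inj_on (\<lambda>a. \<phi> a * M) A" "(\<lambda>a. \<phi> a * M) ` A \<subseteq> {..<k * M}"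
    using \<phi> \<open>M > 0\<close> by (auto simp: inj_on_def)
  moreover have "\<beta> ` B \<subseteq> [{..<k * M}]\<^bsup>k\<^esup>"
    using off_less by (auto simp: \<beta>_off block_transversal_in_nsets)
  moreover have "\<phi> a * M \<in> \<beta> b \<longleftrightarrow> adj a b" if "a \<in> A" "b \<in> B" for a b
  proof -
    have "\<phi> a * M \<in> \<beta> b \<longleftrightarrow> off b (\<phi> a) = 0"
      using mem_\<beta>[OF that(2)] \<phi>(2) that(1) \<open>M > 0\<close> by auto
    also have "\<dots> \<longleftrightarrow> \<phi> a \<in> \<phi> ` {a\<in>A. adj a b}"
      using \<psi>(2) that(2) by (force simp: off_def)
    also have "\<dots> \<longleftrightarrow> adj a b"
      using \<phi>(1) that(1) by (auto simp: inj_on_def)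
    finally show ?thesis .
  qed
  ultimately show "incidence_embedding A B adj {..<k * M} k (\<lambda>a. \<phi> a * M) \<beta>"
    by (simp add: incidence_embedding_def)
  show "sorted_list_of_set (\<beta> b) ! \<phi> a = \<phi> a * M" if "a \<in> A" "b \<in> B" "adj a b" for a b
    using that \<phi>(2) off_less[OF that(2)]
    by (auto simp: \<beta>_off sorted_list_of_block_transversal off_def)
qed

lemma incidence_embedding_into_blocks:
  fixes adj :: "'a \<Rightarrow> 'b \<Rightarrow> bool"
  assumes fin: "finite A" "finite B" and Q: "Q \<subseteq> {..<k}" "card A \<le> card Q"
    and "card A < k" and "card B < M"
  obtains \<alpha> \<beta> where "incidence_embedding A B adj {..<k * M} k \<alpha> \<beta>"
    and "\<forall>a\<in>A. \<forall>b\<in>B. adj a b \<longrightarrow> (\<exists>r\<in>Q. sorted_list_of_set (\<beta> b) ! r = \<alpha> a)"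
proof -
  obtain \<phi> where \<phi>: "inj_on \<phi> A" "\<phi> ` A \<subseteq> Q"
    using card_le_inj[OF fin(1) _ Q(2)] Q(1) finite_subset by blast
  obtain \<psi> where \<psi>: "inj_on \<psi> B" "\<psi> ` B \<subseteq> {1..<M}"
    using card_le_inj[OF fin(2), of "{1..<M}"] \<open>card B < M\<close> by fastforce
  have "\<not> {..<k} \<subseteq> \<phi> ` A"
    using card_mono[OF finite_imageI[OF fin(1)]] card_image_le[OF fin(1), of \<phi>] \<open>card A < k\<close>
    by fastforce
  then obtain r0 where r0: "r0 < k" "r0 \<notin> \<phi> ` A"
    by blast
  have "\<phi> ` A \<subseteq> {..<k}" "M > 0"
    using \<phi>(2) Q(1) \<open>card B < M\<close> by auto
  note blocks = incidence_embedding_block_transversals[where adj = adj, OF \<phi>(1) this(1) r0 \<psi> this(2)]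
  show thesis
    using blocks(2) \<phi>(2) by (intro that[OF blocks(1)]) blast
qed

lemma Inl_Inr_in_B_edges_iff:
  "{Inl x, Inr X} \<in> B_edges n k \<longleftrightarrow> x \<in> {1..n} \<and> X \<in> [{1..n}]\<^bsup>k\<^esup> \<and> x \<in> X"
  by (auto simp: B_edges_def nsets_def doubleton_eq_iff intro: finite_subset)

lemma B_edgesE:
  assumes "e \<in> B_edges n k"
  obtains x X where "e = {Inl x, Inr X}" and "x \<in> X"
  using assms unfolding B_edges_def by blast

lemma Inl_Inl_notin_B_edges: "{Inl x, Inl y} \<notin> B_edges n k"
  by (auto elim!: B_edgesE simp: doubleton_eq_iff)

lemma Inr_Inr_notin_B_edges: "{Inr X, Inr Y} \<notin> B_edges n k"
  by (auto elim!: B_edgesE simp: doubleton_eq_iff)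

lemma induced_B_subgraph_if_incidence_embedding:
  assumes "A \<inter> B = {}" and E: "\<forall>e\<in>E. \<exists>a\<in>A. \<exists>b\<in>B. e = {a, b}"
    and emb: "incidence_embedding A B (\<lambda>a b. {a, b} \<in> E) {1..n} k \<alpha> \<beta>"
    and fA: "\<And>a. a \<in> A \<Longrightarrow> f a = Inl (\<alpha> a)" and fB: "\<And>b. b \<in> B \<Longrightarrow> f b = Inr (\<beta> b)"
  shows "inj_on f (A \<union> B)" and "f ` (A \<union> B) \<subseteq> B_verts n k"
    and "\<forall>u\<in>A \<union> B. \<forall>v\<in>A \<union> B. {u, v} \<in> E \<longleftrightarrow> {f u, f v} \<in> B_edges n k"
proof -
  have \<alpha>: "inj_on \<alpha> A" "\<alpha> ` A \<subseteq> {1..n}" and \<beta>: "inj_on \<beta> B" "\<beta> ` B \<subseteq> [{1..n}]\<^bsup>k\<^esup>"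
    and adj: "\<forall>a\<in>A. \<forall>b\<in>B. \<alpha> a \<in> \<beta> b \<longleftrightarrow> {a, b} \<in> E"
    using emb by (auto simp: incidence_embedding_def)
  have "inj_on f A" "inj_on f B" "f ` A \<inter> f ` B = {}"
    using \<alpha>(1) \<beta>(1) by (auto simp: inj_on_def fA fB)
  then show "inj_on f (A \<union> B)"
    using \<open>A \<inter> B = {}\<close> by (simp add: inj_on_Un Diff_triv Int_commute)
  show "f ` (A \<union> B) \<subseteq> B_verts n k"
    using \<alpha>(2) \<beta>(2) by (auto simp: B_verts_def nsets_def fA fB)
  show "\<forall>u\<in>A \<union> B. \<forall>v\<in>A \<union> B. {u, v} \<in> E \<longleftrightarrow> {f u, f v} \<in> B_edges n k"
  proof (intro ballI)
    fix u v assume uv: "u \<in> A \<union> B" "v \<in> A \<union> B"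
    have across: "{a, b} \<in> E \<longleftrightarrow> {f a, f b} \<in> B_edges n k" if "a \<in> A" "b \<in> B" for a b
      using that \<alpha>(2) \<beta>(2) adj by (auto simp: fA fB Inl_Inr_in_B_edges_iff)
    consider "u \<in> A" "v \<in> B" | "u \<in> B" "v \<in> A" | "u \<in> A \<longleftrightarrow> v \<in> A"
      using uv by blast
    then show "{u, v} \<in> E \<longleftrightarrow> {f u, f v} \<in> B_edges n k"
    proof cases
      case 1
      then show ?thesis by (rule across)
    next
      case 2
      then show ?thesis using across[of v u] by (simp add: insert_commute)
    next
      case 3
      then have "{u, v} \<notin> E"
        using E uv \<open>A \<inter> B = {}\<close> by (fastforce simp: doubleton_eq_iff)
      moreover have "{f u, f v} \<notin> B_edges n k"
        using 3 uv by (auto simp: fA fB Inl_Inl_notin_B_edges Inr_Inr_notin_B_edges)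
      ultimately show ?thesis by simp
    qed
  qed
qed

definition monochromatic_induced_copy ::
    "'a set \<Rightarrow> 'a set set \<Rightarrow> nat \<Rightarrow> nat \<Rightarrow> ((nat + nat set) set \<Rightarrow> bool) \<Rightarrow> bool"
  where "monochromatic_induced_copy V E n k c \<longleftrightarrow>
    (\<exists>V'. V' \<subseteq> B_verts n k \<and>
        (\<exists>f. bij_betw f V V' \<and> (\<forall>u\<in>V. \<forall>v\<in>V. {u, v} \<in> E \<longleftrightarrow> {f u, f v} \<in> B_edges n k)) \<and>
        (\<exists>col. \<forall>e\<in>B_edges n k. e \<subseteq> V' \<longrightarrow> c e = col))"

lemma monochromatic_induced_copy_if_incidence_embedding:
  assumes "A \<inter> B = {}" and E: "\<forall>e\<in>E. \<exists>a\<in>A. \<exists>b\<in>B. e = {a, b}"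
    and emb: "incidence_embedding A B (\<lambda>a b. {a, b} \<in> E) {1..n} k \<alpha> \<beta>"
    and col: "\<forall>a\<in>A. \<forall>b\<in>B. {a, b} \<in> E \<longrightarrow> c {Inl (\<alpha> a), Inr (\<beta> b)} = col"
  shows "monochromatic_induced_copy (A \<union> B) E n k c"
proof -
  define f where "f u = (if u \<in> A then Inl (\<alpha> u) else Inr (\<beta> u))" for u
  have fA: "f a = Inl (\<alpha> a)" if "a \<in> A" for a
    using that by (simp add: f_def)
  have fB: "f b = Inr (\<beta> b)" if "b \<in> B" for b
    using that \<open>A \<inter> B = {}\<close> by (auto simp: f_def)
  note induced = induced_B_subgraph_if_incidence_embedding[OF assms(1-3) fA fB]
  have "\<forall>e\<in>B_edges n k. e \<subseteq> f ` (A \<union> B) \<longrightarrow> c e = col"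
  proof (intro ballI impI)
    fix e assume "e \<in> B_edges n k" and sub: "e \<subseteq> f ` (A \<union> B)"
    then obtain x X where e: "e = {Inl x, Inr X}" "x \<in> X"
      by (elim B_edgesE)
    obtain a where "a \<in> A" "x = \<alpha> a"
      using sub e(1) by (auto simp: f_def split: if_splits)
    moreover obtain b where "b \<in> B" "X = \<beta> b"
      using sub e(1) \<open>A \<inter> B = {}\<close> by (auto simp: f_def split: if_splits)
    moreover have "\<alpha> a \<in> \<beta> b \<longleftrightarrow> {a, b} \<in> E"
      using emb \<open>a \<in> A\<close> \<open>b \<in> B\<close> by (simp add: incidence_embedding_def)
    ultimately show "c e = col"
      using col e by simp
  qed
  then show ?thesis
    using induced(2,3) inj_on_imp_bij_betw[OF induced(1)] unfolding monochromatic_induced_copy_def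
    by (intro exI[of _ "f ` (A \<union> B)"] exI[of _ f] exI[of _ col] conjI)
qed

lemma monochromatic_induced_copy_if_position_homogeneous:
  assumes "A \<inter> B = {}" and E: "\<forall>e\<in>E. \<exists>a\<in>A. \<exists>b\<in>B. e = {a, b}"
    and "finite A" "finite B" "2 * card A < k" "card B < M"
    and h: "inj_on h {..<k * M}" "h ` {..<k * M} \<subseteq> {1..n}"
    and P: "\<forall>X \<in> [{..<k * M}]\<^bsup>k\<^esup>. \<forall>r<k.
              c {Inl (h (sorted_list_of_set X ! r)), Inr (h ` X)} \<longleftrightarrow> r \<in> P"
  shows "monochromatic_induced_copy (A \<union> B) E n k c"
proof -
  obtain Q col where Q: "Q \<subseteq> {..<k}" "k \<le> 2 * card Q" and Q_col: "\<forall>r\<in>Q. r \<in> P \<longleftrightarrow> col"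
    using half_subset_inside_or_outside[OF finite_lessThan, of k P] by auto
  have "card A \<le> card Q" "card A < k"
    using Q(2) \<open>2 * card A < k\<close> by simp_all
  then obtain \<alpha> \<beta> where emb: "incidence_embedding A B (\<lambda>a b. {a, b} \<in> E) {..<k * M} k \<alpha> \<beta>"
    and pos: "\<forall>a\<in>A. \<forall>b\<in>B. {a, b} \<in> E \<longrightarrow> (\<exists>r\<in>Q. sorted_list_of_set (\<beta> b) ! r = \<alpha> a)"
    using incidence_embedding_into_blocks[OF \<open>finite A\<close> \<open>finite B\<close> Q(1)] \<open>card B < M\<close> by blast
  have "incidence_embedding A B (\<lambda>a b. {a, b} \<in> E) {1..n} k (h \<circ> \<alpha>) (\<lambda>b. h ` \<beta> b)"
    using emb h by (rule incidence_embedding_image)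
  moreover have "\<forall>a\<in>A. \<forall>b\<in>B. {a, b} \<in> E \<longrightarrow> c {Inl ((h \<circ> \<alpha>) a), Inr (h ` \<beta> b)} = col"
  proof (intro ballI impI)
    fix a b assume ab: "a \<in> A" "b \<in> B" "{a, b} \<in> E"
    with pos obtain r where "r \<in> Q" and r: "sorted_list_of_set (\<beta> b) ! r = \<alpha> a"
      by blast
    have "\<beta> b \<in> [{..<k * M}]\<^bsup>k\<^esup>"
      using emb ab(2) by (auto simp: incidence_embedding_def)
    moreover have "r < k"
      using Q(1) \<open>r \<in> Q\<close> by auto
    ultimately have "c {Inl (h (\<alpha> a)), Inr (h ` \<beta> b)} \<longleftrightarrow> r \<in> P"
      using P by (simp flip: r)
    then show "c {Inl ((h \<circ> \<alpha>) a), Inr (h ` \<beta> b)} = col"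
      using Q_col \<open>r \<in> Q\<close> by simp
  qed
  ultimately show ?thesis
    by (rule monochromatic_induced_copy_if_incidence_embedding[OF \<open>A \<inter> B = {}\<close> E])
qed

theorem mainTheorem1:
  fixes V :: "'a set" and E :: "'a set set"
  assumes "finite V" and "bipartite_graph V E"
  shows "\<exists>n k. k \<le> n \<and>
    (\<forall>c :: (nat + nat set) set \<Rightarrow> bool.
      \<exists>V'. V' \<subseteq> B_verts n k \<and>
        (\<exists>f. bij_betw f V V' \<and>
             (\<forall>u\<in>V. \<forall>v\<in>V. {u, v} \<in> E \<longleftrightarrow> {f u, f v} \<in> B_edges n k)) \<and>
        (\<exists>col. \<forall>e\<in>B_edges n k. e \<subseteq> V' \<longrightarrow> c e = col))"
proof -
  obtain A B where V: "V = A \<union> B" and "A \<inter> B = {}" and E: "\<forall>e\<in>E. \<exists>a\<in>A. \<exists>b\<in>B. e = {a, b}"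
    using assms(2) unfolding bipartite_graph_def by blast
  have AB: "finite A" "finite B" "card A \<le> card V" "card B \<le> card V"
    using assms(1) V by (auto intro: card_mono)
  define k where "k = 2 * card V + 1"
  define M where "M = card V + 1"
  obtain N where "k * M \<le> N" and ramsey: "\<forall>col :: nat \<Rightarrow> nat set \<Rightarrow> bool. \<exists>h P.
      strict_mono_on {..<k * M} h \<and> h ` {..<k * M} \<subseteq> {1..N} \<and>
      (\<forall>X \<in> [{..<k * M}]\<^bsup>k\<^esup>. \<forall>r<k. col (h (sorted_list_of_set X ! r)) (h ` X) \<longleftrightarrow> r \<in> P)"
    by (rule ramsey_position_homogeneous)
  have "monochromatic_induced_copy V E N k c" for c
  proof -
    obtain h P where h: "strict_mono_on {..<k * M} h" "h ` {..<k * M} \<subseteq> {1..N}" and P: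
      "\<forall>X \<in> [{..<k * M}]\<^bsup>k\<^esup>. \<forall>r<k. c {Inl (h (sorted_list_of_set X ! r)), Inr (h ` X)} \<longleftrightarrow> r \<in> P"
      using ramsey[rule_format, of "\<lambda>x X. c {Inl x, Inr X}"] by blast
    have "2 * card A < k" "card B < M"
      using AB by (simp_all add: k_def M_def)
    then show ?thesis
      unfolding V by (rule monochromatic_induced_copy_if_position_homogeneous[OF \<open>A \<inter> B = {}\<close> E AB(1,2)
          _ _ strict_mono_on_imp_inj_on[OF h(1)] h(2) P])
  qed
  moreover have "k \<le> N"
    using \<open>k * M \<le> N\<close> by (simp add: M_def)
  ultimately show ?thesis
    unfolding monochromatic_induced_copy_def by blast
qed

end
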